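(* In the Com-IC model, if $q_{\mathcal{B}|\mathcal{A}}=q_{\mathcal{B}|\emptyset}$ then, for any fixed $\mathcal{B}$-seed set $S_\mathcal{B}$, the probability distribution of the final set of $\mathcal{B}$-adopted nodes is the same for every $\mathcal{A}$-seed set $S_\mathcal{A}$ (including $S_\mathcal{A}=\emptyset$). Symmetrically, if $q_{\mathcal{A}|\mathcal{B}}=q_{\mathcal{A}|\emptyset}$, the distribution of the final set of $\mathcal{A}$-adopted nodes does not depend on the $\mathcal{B}$-seed set.
   Context: Com-IC model. Let $G=(V,E,p)$ be a directed graph with $p:E\to[0,1]$ and $N^-(v)$ the in-neighbours of $v$. Two items $\mathcal{A},\mathcal{B}$; GAPs $\mathbf{Q}=(q_{\mathcal{A}|\emptyset},q_{\mathcal{A}|\mathcal{B}},q_{\mathcal{B}|\emptyset},q_{\mathcal{B}|\mathcal{A}})\in[0,1]^4$. Given seed sets $S_\mathcal{A},S_\mathcal{B}\subseteq V$, randomness: each edge $(u,v)$ independently live w.p. $p(u,v)$; each node $v$ independently draws $\alpha^v_\mathcal{A},\alpha^v_\mathcal{B}$ uniform on $[0,1]$, a uniformly random permutation $\pi_v$ of $N^-(v)$, and a fair coin $\tau_v\in\{\mathcal{A},\mathcal{B}\}$. For each item $X$ each node is $X$-idle, $X$-suspended, $X$-adopted or $X$-rejected; initially all idle. At step $0$ nodes of $S_\mathcal{A}$ become $\mathcal{A}$-adopted and nodes of $S_\mathcal{B}$ become $\mathcal{B}$-adopted (order for nodes in both given by $\tau_v$). At step $t\ge1$, $v$ is informed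 of $X$ by in-neighbour $u$ if $(u,v)$ is live and $u$ adopted $X$ at step $t-1$; informing in-neighbours are processed in order $\pi_v$ (an in-neighbour that adopted both items is processed for both, in its adoption order). When $v$ is informed of $X$ ($Y$ the other item) while $X$-idle: if $Y$-adopted, $v$ becomes $X$-adopted if $\alpha^v_X\le q_{X|Y}$, else $X$-rejected; otherwise $X$-adopted if $\alpha^v_X\le q_{X|\emptyset}$, else $X$-suspended. Informing a non-$X$-idle node of $X$ has no effect. Reconsideration: when an $X$-suspended node becomes $Y$-adopted, it becomes $X$-adopted if $\alpha^v_X\le q_{X|Y}$, else $X$-rejected. The process stops when nothing changes. *)

theory Defs
  imports "HOL-Probability.Probability" "HOL-Combinatorics.Multiset_Permutations"
begin

datatype item = IA | IB

fun other :: "item \<Rightarrow> item" where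
  "other IA = IB" | "other IB = IA"

datatype status = Idle | Suspended | Adopted | Rejected

text \<open>GAPs  Q = (q_{A|0}, q_{A|B}, q_{B|0}, q_{B|A}).
  gap Q X b is q_{X|Y} if b (the other item Y is adopted), else q_{X|0}.\<close>
fun gap :: "real \<times> real \<times> real \<times> real \<Rightarrow> item \<Rightarrow> bool \<Rightarrow> real" where
  "gap (qA0, qAB, qB0, qBA) IA b = (if b then qAB else qA0)"
| "gap (qA0, qAB, qB0, qBA) IB b = (if b then qBA else qB0)"

text \<open>Local state of one node: its status for each item, and the list of items
  it adopted during the current step (in adoption order).\<close>
type_synonym local_state = "(item \<Rightarrow> status) \<times> item list"

definition adopt :: "real \<times> real \<times> real \<times> real \<Rightarrow> (item \<Rightarrow> real) \<Rightarrow> item \<Rightarrow> local_state \<Rightarrow> local_state" where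
  "adopt Q \<alpha> X ls = (let (s, nv) = ls; Y = other X; s' = s(X := Adopted); nv' = nv @ [X] in
     if s Y = Suspended then
       (if \<alpha> Y \<le> gap Q Y True then (s'(Y := Adopted), nv' @ [Y]) else (s'(Y := Rejected), nv'))
     else (s', nv'))"

definition inform :: "real \<times> real \<times> real \<times> real \<Rightarrow> (item \<Rightarrow> real) \<Rightarrow> local_state \<Rightarrow> item \<Rightarrow> local_state" where
  "inform Q \<alpha> ls X = (let (s, nv) = ls; Y = other X in
     if s X = Idle then
       (if s Y = Adopted then
          (if \<alpha> X \<le> gap Q X True then adopt Q \<alpha> X ls else (s(X := Rejected), nv))
        else
          (if \<alpha> X \<le> gap Q X False then adopt Q \<alpha> X ls else (s(X := Suspended), nv)))
     else ls)"

text \<open>Global state: status of every node for every item, and the items adopted by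
  every node in the last step, in adoption order.\<close>
type_synonym 'v gstate = "('v \<Rightarrow> item \<Rightarrow> status) \<times> ('v \<Rightarrow> item list)"

text \<open>Randomness: live-edge indicator, permutations pi_v of the in-neighbours,
  coins tau_v (True = A first), thresholds alpha^v_X.\<close>
type_synonym 'v outcome = "((('v \<times> 'v) \<Rightarrow> bool) \<times> ('v \<Rightarrow> 'v list) \<times> ('v \<Rightarrow> bool)) \<times> ('v \<Rightarrow> item \<Rightarrow> real)"

definition init_state :: "'v set \<Rightarrow> 'v set \<Rightarrow> ('v \<Rightarrow> bool) \<Rightarrow> 'v gstate" where
  "init_state SA SB \<tau> =
     ((\<lambda>v X. if (X = IA \<and> v \<in> SA) \<or> (X = IB \<and> v \<in> SB) then Adopted else Idle),
      (\<lambda>v. if v \<in> SA \<and> v \<in> SB then (if \<tau> v then [IA, IB] else [IB, IA])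
           else if v \<in> SA then [IA] else if v \<in> SB then [IB] else []))"

definition informings :: "(('v \<times> 'v) \<Rightarrow> bool) \<Rightarrow> ('v \<Rightarrow> 'v list) \<Rightarrow> ('v \<Rightarrow> item list) \<Rightarrow> 'v \<Rightarrow> item list" where
  "informings live \<pi> nw v = concat (map (\<lambda>u. if live (u, v) then nw u else []) (\<pi> v))"

definition step :: "real \<times> real \<times> real \<times> real \<Rightarrow> 'v outcome \<Rightarrow> 'v gstate \<Rightarrow> 'v gstate" where
  "step Q \<omega> g = (let ((live, \<pi>, \<tau>), \<alpha>) = \<omega>; (st, nw) = g;
      node = (\<lambda>v. foldl (inform Q (\<alpha> v)) (st v, []) (informings live \<pi> nw v)) in
      ((\<lambda>v. fst (node v)), (\<lambda>v. snd (node v))))"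

definition final_state :: "real \<times> real \<times> real \<times> real \<Rightarrow> 'v set \<Rightarrow> 'v set \<Rightarrow> 'v outcome \<Rightarrow> 'v gstate" where
  "final_state Q SA SB \<omega> =
     (let s0 = init_state SA SB (snd (snd (fst \<omega>)));
          k = (LEAST k. step Q \<omega> ((step Q \<omega> ^^ k) s0) = (step Q \<omega> ^^ k) s0)
      in (step Q \<omega> ^^ k) s0)"

definition adopted_set :: "real \<times> real \<times> real \<times> real \<Rightarrow> 'v set \<Rightarrow> 'v set \<Rightarrow> item \<Rightarrow> 'v outcome \<Rightarrow> 'v set" where
  "adopted_set Q SA SB X \<omega> = {v. fst (final_state Q SA SB \<omega>) v X = Adopted}"

definition in_nbrs :: "('v \<times> 'v) set \<Rightarrow> 'v \<Rightarrow> 'v set" where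
  "in_nbrs E v = {u. (u, v) \<in> E}"

definition discrete_pmf :: "('v::finite \<times> 'v) set \<Rightarrow> ('v \<times> 'v \<Rightarrow> real)
    \<Rightarrow> ((('v \<times> 'v) \<Rightarrow> bool) \<times> ('v \<Rightarrow> 'v list) \<times> ('v \<Rightarrow> bool)) pmf" where
  "discrete_pmf E p =
     pair_pmf (Pi_pmf E False (\<lambda>e. bernoulli_pmf (p e)))
       (pair_pmf (Pi_pmf UNIV [] (\<lambda>v. pmf_of_set (permutations_of_set (in_nbrs E v))))
                 (Pi_pmf UNIV False (\<lambda>v. bernoulli_pmf (1/2))))"

definition alpha_measure :: "('v \<Rightarrow> item \<Rightarrow> real) measure" where
  "alpha_measure = PiM UNIV (\<lambda>_. PiM UNIV (\<lambda>_. uniform_measure lborel {0..1::real}))"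

definition comic_space :: "('v::finite \<times> 'v) set \<Rightarrow> ('v \<times> 'v \<Rightarrow> real) \<Rightarrow> 'v outcome measure" where
  "comic_space E p = measure_pmf (discrete_pmf E p) \<Otimes>\<^sub>M alpha_measure"

definition prob_adopted :: "('v::finite \<times> 'v) set \<Rightarrow> ('v \<times> 'v \<Rightarrow> real) \<Rightarrow> real \<times> real \<times> real \<times> real
    \<Rightarrow> 'v set \<Rightarrow> 'v set \<Rightarrow> item \<Rightarrow> 'v set \<Rightarrow> real" where
  "prob_adopted E p Q SA SB X T =
     measure (comic_space E p) {\<omega> \<in> space (comic_space E p). adopted_set Q SA SB X \<omega> = T}"

end

theory Submission
  imports Defs
begin

text \<open>
  The claim holds outcome by outcome, so neither the distribution nor the bounds on the
  probabilities matter.  Fix the randomness and an item X with q_{X|Y} = q_{X|\<emptyset>}.  When a node is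
  first informed of X it adopts X iff its threshold is at most q_{X|\<emptyset>}, whatever its state for Y;
  if it suspends X instead, a later reconsideration compares the same threshold with the same
  value and rejects.  Identifying "suspended" with "rejected", the X-status of every node and the
  set of nodes that just adopted X therefore evolve step by step independently of the Y-seeds.
  Both runs reach their final state (each non-final step adopts something new), so the final sets
  of X-adopters coincide.
\<close>

lemma funpow_fixpoint_exists:
  fixes f :: "'a \<Rightarrow> 'a" and \<mu> :: "'a \<Rightarrow> nat"
  assumes progress: "\<And>y. f (f y) \<noteq> f y \<Longrightarrow> \<mu> y < \<mu> (f y)" and bounded: "\<And>y. \<mu> y \<le> B"
  shows "\<exists>k. f ((f ^^ k) x) = (f ^^ k) x"
proof (rule ccontr)
  assume "\<nexists>k. f ((f ^^ k) x) = (f ^^ k) x"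
  then have "\<mu> ((f ^^ k) x) < \<mu> ((f ^^ Suc k) x)" for k
    using progress[of "(f ^^ k) x"] by (metis funpow.simps(2) comp_apply)
  then have "k \<le> \<mu> ((f ^^ k) x)" for k
    by (induction k) (auto simp del: funpow.simps intro: Suc_leI order.strict_trans1)
  then show False
    using bounded[of "(f ^^ Suc B) x"] by (meson not_less_eq_eq)
qed

lemma funpow_Least_fixpoint_stable:
  assumes "\<exists>k. f ((f ^^ k) x) = (f ^^ k) x" "(LEAST k. f ((f ^^ k) x) = (f ^^ k) x) \<le> m"
  shows "(f ^^ m) x = (f ^^ (LEAST k. f ((f ^^ k) x) = (f ^^ k) x)) x"
proof -
  define k where "k = (LEAST k. f ((f ^^ k) x) = (f ^^ k) x)"
  have fixpoint: "f ((f ^^ k) x) = (f ^^ k) x"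
    unfolding k_def using assms(1) by (rule LeastI_ex)
  have "(f ^^ (j + k)) x = (f ^^ k) x" for j
    by (induction j) (simp_all add: fixpoint)
  then show ?thesis
    using assms(2) by (metis k_def le_add_diff_inverse2)
qed

lemma UNIV_item: "(UNIV :: item set) = {IA, IB}"
  using item.exhaust by auto

instance item :: finite
  by standard (simp add: UNIV_item)

text \<open>When q_{X|Y} = q_{X|\<emptyset>}, a suspended node whose threshold exceeds q_{X|\<emptyset>} (the invariant
  \<open>suspension_consistent\<close>) rejects X on reconsideration, so \<open>settled\<close> identifies the two states.\<close>

fun settled :: "status \<Rightarrow> status" where
  "settled Suspended = Rejected"
| "settled s = s"

lemma settled_eq_Idle_iff [simp]:
  "settled s = Idle \<longleftrightarrow> s = Idle" "Idle = settled s \<longleftrightarrow> s = Idle"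
  by (cases s; simp)+

lemma settled_eq_Adopted_iff [simp]:
  "settled s = Adopted \<longleftrightarrow> s = Adopted" "Adopted = settled s \<longleftrightarrow> s = Adopted"
  by (cases s; simp)+

definition suspension_consistent ::
    "real \<times> real \<times> real \<times> real \<Rightarrow> (item \<Rightarrow> real) \<Rightarrow> item \<Rightarrow> (item \<Rightarrow> status) \<Rightarrow> bool" where
  "suspension_consistent Q \<alpha> X s \<longleftrightarrow> (s X = Suspended \<longrightarrow> gap Q X False < \<alpha> X)"

lemma inform_settled:
  assumes "gap Q X True = gap Q X False" "suspension_consistent Q \<alpha> X s"
    and "inform Q \<alpha> (s, acc) Z = (s', acc')"
  shows "settled (s' X) = (if Z = X \<and> s X = Idle
             then (if \<alpha> X \<le> gap Q X False then Adopted else Rejected) else settled (s X))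
     \<and> (X \<in> set acc' \<longleftrightarrow> X \<in> set acc \<or> (Z = X \<and> s X = Idle \<and> \<alpha> X \<le> gap Q X False))
     \<and> suspension_consistent Q \<alpha> X s'"
  using assms
  by (cases X; cases Z) (auto simp: inform_def adopt_def suspension_consistent_def Let_def split: if_splits)

lemma foldl_inform_settled:
  assumes "gap Q X True = gap Q X False" "suspension_consistent Q \<alpha> X s"
    and "foldl (inform Q \<alpha>) (s, acc) xs = (s', acc')"
  shows "settled (s' X) = (if X \<in> set xs \<and> s X = Idle
             then (if \<alpha> X \<le> gap Q X False then Adopted else Rejected) else settled (s X))
     \<and> (X \<in> set acc' \<longleftrightarrow> X \<in> set acc \<or> (X \<in> set xs \<and> s X = Idle \<and> \<alpha> X \<le> gap Q X False))
     \<and> suspension_consistent Q \<alpha> X s'"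
  using assms(2,3)
proof (induction xs arbitrary: s acc)
  case (Cons Z xs)
  obtain s1 acc1 where s1: "inform Q \<alpha> (s, acc) Z = (s1, acc1)"
    by fastforce
  note first = inform_settled[OF assms(1) Cons.prems(1) s1]
  have "foldl (inform Q \<alpha>) (s1, acc1) xs = (s', acc')"
    using Cons.prems(2) s1 by simp
  note rest = Cons.IH[OF conjunct2[OF conjunct2[OF first]] this]
  show ?case
    using first rest by (auto split: if_splits)
qed simp

lemma foldl_inform_progress:
  assumes "foldl (inform Q \<alpha>) (s, acc) xs = (s', acc')"
  shows "(\<forall>X. s X = Adopted \<longrightarrow> s' X = Adopted)
     \<and> (\<forall>X \<in> set acc' - set acc. s X \<noteq> Adopted \<and> s' X = Adopted)"
  using assms
proof (induction xs arbitrary: s acc)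
  case (Cons Z xs)
  obtain s1 acc1 where s1: "inform Q \<alpha> (s, acc) Z = (s1, acc1)"
    by fastforce
  have first: "(\<forall>X. s X = Adopted \<longrightarrow> s1 X = Adopted)
     \<and> (\<forall>X \<in> set acc1 - set acc. s X \<noteq> Adopted \<and> s1 X = Adopted)"
    using s1 by (auto simp: inform_def adopt_def Let_def split: if_splits)
  have "foldl (inform Q \<alpha>) (s1, acc1) xs = (s', acc')"
    using Cons.prems s1 by simp
  with first Cons.IH show ?case
    by blast
qed simp

lemma step_Pair:
  "step Q ((live, \<pi>, \<tau>), \<alpha>) (st, nw) =
     ((\<lambda>v. fst (foldl (inform Q (\<alpha> v)) (st v, []) (informings live \<pi> nw v))),
      (\<lambda>v. snd (foldl (inform Q (\<alpha> v)) (st v, []) (informings live \<pi> nw v))))"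
  by (simp add: step_def Let_def)

lemma mem_informings_iff:
  "X \<in> set (informings live \<pi> nw v) \<longleftrightarrow> (\<exists>u \<in> set (\<pi> v). live (u, v) \<and> X \<in> set (nw u))"
  by (auto simp: informings_def split: if_splits)

definition item_equivalent ::
    "real \<times> real \<times> real \<times> real \<Rightarrow> ('v \<Rightarrow> item \<Rightarrow> real) \<Rightarrow> item \<Rightarrow> 'v gstate \<Rightarrow> 'v gstate \<Rightarrow> bool" where
  "item_equivalent Q \<alpha> X g g' \<longleftrightarrow> (\<forall>v.
     settled (fst g v X) = settled (fst g' v X) \<and> (X \<in> set (snd g v) \<longleftrightarrow> X \<in> set (snd g' v))
     \<and> suspension_consistent Q (\<alpha> v) X (fst g v) \<and> suspension_consistent Q (\<alpha> v) X (fst g' v))"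

lemma item_equivalent_step:
  assumes gap: "gap Q X True = gap Q X False" and equivalent: "item_equivalent Q \<alpha> X g g'"
  shows "item_equivalent Q \<alpha> X (step Q ((live, \<pi>, \<tau>), \<alpha>) g) (step Q ((live, \<pi>, \<tau>), \<alpha>) g')"
proof -
  obtain st nw st' nw' where g: "g = (st, nw)" and g': "g' = (st', nw')"
    by fastforce
  have "settled (s X) = settled (s' X) \<and> (X \<in> set a \<longleftrightarrow> X \<in> set a')
        \<and> suspension_consistent Q (\<alpha> v) X s \<and> suspension_consistent Q (\<alpha> v) X s'"
    if run: "foldl (inform Q (\<alpha> v)) (st v, []) (informings live \<pi> nw v) = (s, a)"
      and run': "foldl (inform Q (\<alpha> v)) (st' v, []) (informings live \<pi> nw' v) = (s', a')"
    for v s a s' a'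
  proof -
    have settled_eq: "settled (st v X) = settled (st' v X)"
      and informed_iff: "X \<in> set (informings live \<pi> nw v) \<longleftrightarrow> X \<in> set (informings live \<pi> nw' v)"
      and consistent: "suspension_consistent Q (\<alpha> v) X (st v)"
        "suspension_consistent Q (\<alpha> v) X (st' v)"
      using equivalent by (auto simp: item_equivalent_def g g' mem_informings_iff)
    have "st v X = Idle \<longleftrightarrow> st' v X = Idle"
      using settled_eq by (metis settled_eq_Idle_iff(1))
    then show ?thesis
      using settled_eq informed_iff foldl_inform_settled[OF gap consistent(1) run]
        foldl_inform_settled[OF gap consistent(2) run'] by simp
  qed
  then show ?thesis
    unfolding item_equivalent_def g g' step_Pair by (simp add: prod_eq_iff)
qed

definition adopted_count :: "'v gstate \<Rightarrow> nat" where
  "adopted_count g = card {(v, X). fst g v X = Adopted}"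

lemma adopted_count_le: "adopted_count (g :: 'v::finite gstate) \<le> CARD('v \<times> item)"
  unfolding adopted_count_def by (rule card_mono) auto

lemma step_eq_self_if_no_news:
  assumes "snd g = (\<lambda>_. [])"
  shows "step Q \<omega> g = g"
proof -
  obtain live \<pi> \<tau> \<alpha> where "\<omega> = ((live, \<pi>, \<tau>), \<alpha>)"
    by (metis prod.collapse)
  moreover obtain st where "g = (st, \<lambda>_. [])"
    using assms by (metis prod.collapse)
  moreover have "informings live \<pi> (\<lambda>_. []) v = []" for v
    by (simp add: informings_def)
  ultimately show ?thesis
    by (simp add: step_Pair)
qed

lemma adopted_count_step_less:
  fixes g :: "'v::finite gstate"
  assumes "snd (step Q \<omega> g) \<noteq> (\<lambda>_. [])"
  shows "adopted_count g < adopted_count (step Q \<omega> g)"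
proof -
  obtain live \<pi> \<tau> \<alpha> where \<omega>: "\<omega> = ((live, \<pi>, \<tau>), \<alpha>)"
    by (metis prod.collapse)
  obtain st nw where g: "g = (st, nw)"
    by fastforce
  define run where "run v = foldl (inform Q (\<alpha> v)) (st v, []) (informings live \<pi> nw v)" for v
  have step: "step Q \<omega> g = (\<lambda>v. fst (run v), \<lambda>v. snd (run v))"
    by (simp add: \<omega> g step_Pair run_def)
  have progress: "(\<forall>X. st v X = Adopted \<longrightarrow> fst (run v) X = Adopted)
     \<and> (\<forall>X \<in> set (snd (run v)). st v X \<noteq> Adopted \<and> fst (run v) X = Adopted)" for v
    using foldl_inform_progress[of Q "\<alpha> v" "st v" "[]"] by (simp add: run_def prod_eq_iff)
  obtain v where "snd (run v) \<noteq> []"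
    using assms unfolding step by auto
  then obtain X where "X \<in> set (snd (run v))"
    by (cases "snd (run v)") auto
  then have "(v, X) \<in> {(v, X). fst (run v) X = Adopted} - {(v, X). st v X = Adopted}"
    using progress by blast
  moreover have "{(v, X). st v X = Adopted} \<subseteq> {(v, X). fst (run v) X = Adopted}"
    using progress by blast
  ultimately have "{(v, X). st v X = Adopted} \<subset> {(v, X). fst (run v) X = Adopted}"
    by blast
  then show ?thesis
    unfolding adopted_count_def step by (simp add: g psubset_card_mono)
qed

lemma adopted_count_less_if_not_stable:
  fixes g :: "'v::finite gstate"
  assumes "step Q \<omega> (step Q \<omega> g) \<noteq> step Q \<omega> g"
  shows "adopted_count g < adopted_count (step Q \<omega> g)"
  using assms step_eq_self_if_no_news adopted_count_step_less by blast

lemma final_state_reached: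
  fixes \<omega> :: "'v::finite outcome" and SA SB :: "'v set"
  defines "s0 \<equiv> init_state SA SB (snd (snd (fst \<omega>)))"
  shows "\<exists>k. \<forall>m \<ge> k. (step Q \<omega> ^^ m) s0 = final_state Q SA SB \<omega>"
proof -
  have "\<exists>k. step Q \<omega> ((step Q \<omega> ^^ k) s0) = (step Q \<omega> ^^ k) s0"
    by (rule funpow_fixpoint_exists[where f = "step Q \<omega>" and \<mu> = adopted_count])
      (use adopted_count_less_if_not_stable adopted_count_le in blast)+
  from funpow_Least_fixpoint_stable[OF this] show ?thesis
    unfolding final_state_def s0_def[symmetric] Let_def by blast
qed

lemma item_equivalent_init_state:
  assumes "X = IA \<Longrightarrow> SA = SA'" and "X = IB \<Longrightarrow> SB = SB'"
  shows "item_equivalent Q \<alpha> X (init_state SA SB \<tau>) (init_state SA' SB' \<tau>)"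
  using assms by (cases X) (auto simp: item_equivalent_def init_state_def suspension_consistent_def)

lemma adopted_set_eq_if_item_equivalent_init:
  fixes \<omega> :: "'v::finite outcome"
  assumes gap: "gap Q X True = gap Q X False"
    and init: "item_equivalent Q (snd \<omega>) X
                 (init_state SA SB (snd (snd (fst \<omega>)))) (init_state SA' SB' (snd (snd (fst \<omega>))))"
  shows "adopted_set Q SA SB X \<omega> = adopted_set Q SA' SB' X \<omega>"
proof -
  obtain live \<pi> \<tau> \<alpha> where \<omega>: "\<omega> = ((live, \<pi>, \<tau>), \<alpha>)"
    by (metis prod.collapse)
  define F where "F = step Q \<omega>"
  define s where "s = init_state SA SB \<tau>"
  define s' where "s' = init_state SA' SB' \<tau>"
  have equiv: "item_equivalent Q \<alpha> X ((F ^^ m) s) ((F ^^ m) s')" for m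
  proof (induction m)
    case 0
    then show ?case using init by (simp add: \<omega> s_def s'_def)
  next
    case (Suc m)
    then show ?case using item_equivalent_step[OF gap] by (simp add: F_def \<omega>)
  qed
  obtain k where k: "\<forall>m \<ge> k. (F ^^ m) s = final_state Q SA SB \<omega>"
    using final_state_reached unfolding F_def s_def \<omega> by fastforce
  obtain k' where k': "\<forall>m \<ge> k'. (F ^^ m) s' = final_state Q SA' SB' \<omega>"
    using final_state_reached unfolding F_def s'_def \<omega> by fastforce
  have "fst ((F ^^ max k k') s) v X = Adopted \<longleftrightarrow> fst ((F ^^ max k k') s') v X = Adopted" for v
    using equiv[of "max k k'"] unfolding item_equivalent_def
    by (metis settled_eq_Adopted_iff(1))
  then show ?thesis
    unfolding adopted_set_def using k k' by simp
qed

theorem lemma3: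
  fixes E :: "('v::finite \<times> 'v) set" and p :: "'v \<times> 'v \<Rightarrow> real"
    and qA0 qAB qB0 qBA :: real
  assumes "\<forall>e\<in>E. 0 \<le> p e \<and> p e \<le> 1"
    and "qA0 \<in> {0..1}" "qAB \<in> {0..1}" "qB0 \<in> {0..1}" "qBA \<in> {0..1}"
  shows "(qBA = qB0 \<longrightarrow> (\<forall>SB SA SA' T.
            prob_adopted E p (qA0, qAB, qB0, qBA) SA SB IB T
          = prob_adopted E p (qA0, qAB, qB0, qBA) SA' SB IB T))
       \<and> (qAB = qA0 \<longrightarrow> (\<forall>SA SB SB' T.
            prob_adopted E p (qA0, qAB, qB0, qBA) SA SB IA T
          = prob_adopted E p (qA0, qAB, qB0, qBA) SA SB' IA T))"
proof (intro conjI impI allI)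
  fix SB SA SA' T
  assume "qBA = qB0"
  then have "adopted_set (qA0, qAB, qB0, qBA) SA SB IB \<omega> = adopted_set (qA0, qAB, qB0, qBA) SA' SB IB \<omega>"
    for \<omega> :: "'v outcome"
    by (intro adopted_set_eq_if_item_equivalent_init item_equivalent_init_state) simp_all
  then show "prob_adopted E p (qA0, qAB, qB0, qBA) SA SB IB T
           = prob_adopted E p (qA0, qAB, qB0, qBA) SA' SB IB T"
    unfolding prob_adopted_def by simp
next
  fix SA SB SB' T
  assume "qAB = qA0"
  then have "adopted_set (qA0, qAB, qB0, qBA) SA SB IA \<omega> = adopted_set (qA0, qAB, qB0, qBA) SA SB' IA \<omega>"
    for \<omega> :: "'v outcome"
    by (intro adopted_set_eq_if_item_equivalent_init item_equivalent_init_state) simp_all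
  then show "prob_adopted E p (qA0, qAB, qB0, qBA) SA SB IA T
           = prob_adopted E p (qA0, qAB, qB0, qBA) SA SB' IA T"
    unfolding prob_adopted_def by simp
qed

end
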